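(* Let $(M^n,g,k)$ be an initial data set with $M$ spin, let $\phi\in\overline{\mathcal S}(M)$ and $p\in M$. If $N(\phi)=|X(\phi)|$ at $p$, or if $N(\phi)=|Y(\phi)|$ at $p$, then at $p$: $$N(\phi)\,\omega(\phi)=X(\phi)\wedge Y(\phi),\qquad X(\phi)\perp Y(\phi),\qquad N(\phi)^2-|X(\phi)|^2-|Y(\phi)|^2+\tfrac12|\omega(\phi)|^2=0 .$$
   Context: Spinor conventions. For a Riemannian spin manifold $(M^n,g)$, $\mathcal S$ is the complex spinor bundle with Hermitian inner product $\langle\cdot,\cdot\rangle$ (complex linear in the first slot); Clifford multiplication by tangent vectors satisfies $vw+wv=-2g(v,w)$ and vectors act skew-Hermitian. Set $\overline{\mathcal S}=\mathcal S\oplus\mathcal S$ with direct-sum inner product, where a tangent vector $e_l$ and an extra element $e_0$ act by $e_l(\psi_1,\psi_2)=(e_l\psi_1,-e_l\psi_2)$, $e_0(\psi_1,\psi_2)=(\psi_2,\psi_1)$. With $\{e_i\}_{i=1}^n$ an orthonormal frame and summation over repeated indices, for $\phi\in\overline{\mathcal S}$: $N(\phi)=|\phi|^2$, $X(\phi)=\langle e_ie_0\phi,\phi\rangle e_i$, $Y(\phi)=\langle\mathbf i e_i\phi,\phi\rangle e_i$, $\omega_{ij}(\phi)=\operatorname{Im}\langle e_ie_je_0\phi,\phi\rangle$; these are real. For vectors $V,W$, $(V\wedge W)_{ij}=V_iW_j-V_jW_i$, and $|\omega|^2=\sum_{i,j}\omega_{ij}^2$. *)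

theory Defs
  imports "HOL-Analysis.Analysis"
begin

text \<open>At the point p we fix an orthonormal frame e_1..e_n of T_pM,
 indexed by the finite type 'n (so n = CARD('n)). The spinor fibre S_p is modelled as
 complex^'m with the standard Hermitian product (complex linear in the first slot), and
 Clifford multiplication by e_i is the complex matrix E i.\<close>

definition herm :: "complex^'m \<Rightarrow> complex^'m \<Rightarrow> complex" where
  "herm u v = (\<Sum>k\<in>UNIV. u$k * cnj (v$k))"

text \<open>E is (Clifford multiplication on) the complex spinor module of Cl(n):
 Clifford relations, skew-Hermitian action, and complex dimension 2^(n div 2)
 (which forces it to be an irreducible spinor representation).\<close>
definition spinor_module :: "('n::finite \<Rightarrow> complex^'m::finite^'m) \<Rightarrow> bool" where
  "spinor_module E \<longleftrightarrow>
     (\<forall>i j. E i ** E j + E j ** E i = mat (if i = j then -2 else 0)) \<and>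
     (\<forall>i u v. herm (E i *v u) v = - herm u (E i *v v)) \<and>
     CARD('m) = 2 ^ (CARD('n) div 2)"

type_synonym 'm sbar = "(complex^'m) \<times> (complex^'m)"

definition hermb :: "'m::finite sbar \<Rightarrow> 'm sbar \<Rightarrow> complex" where
  "hermb \<phi> \<psi> = herm (fst \<phi>) (fst \<psi>) + herm (snd \<phi>) (snd \<psi>)"

definition cliff :: "('n \<Rightarrow> complex^'m::finite^'m) \<Rightarrow> 'n \<Rightarrow> 'm sbar \<Rightarrow> 'm sbar" where
  "cliff E i \<phi> = (E i *v fst \<phi>, - (E i *v snd \<phi>))"

definition e0 :: "'m::finite sbar \<Rightarrow> 'm sbar" where
  "e0 \<phi> = (snd \<phi>, fst \<phi>)"

definition imul :: "'m::finite sbar \<Rightarrow> 'm sbar" where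
  "imul \<phi> = (\<i> *s fst \<phi>, \<i> *s snd \<phi>)"

definition Nf :: "'m::finite sbar \<Rightarrow> real" where
  "Nf \<phi> = Re (hermb \<phi> \<phi>)"

definition Xf :: "('n::finite \<Rightarrow> complex^'m::finite^'m) \<Rightarrow> 'm sbar \<Rightarrow> real^'n" where
  "Xf E \<phi> = (\<chi> i. Re (hermb (cliff E i (e0 \<phi>)) \<phi>))"

definition Yf :: "('n::finite \<Rightarrow> complex^'m::finite^'m) \<Rightarrow> 'm sbar \<Rightarrow> real^'n" where
  "Yf E \<phi> = (\<chi> i. Re (hermb (imul (cliff E i \<phi>)) \<phi>))"

definition omega :: "('n::finite \<Rightarrow> complex^'m::finite^'m) \<Rightarrow> 'm sbar \<Rightarrow> 'n \<Rightarrow> 'n \<Rightarrow> real" where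
  "omega E \<phi> i j = Im (hermb (cliff E i (cliff E j (e0 \<phi>))) \<phi>)"

definition wedge :: "real^'n::finite \<Rightarrow> real^'n \<Rightarrow> 'n \<Rightarrow> 'n \<Rightarrow> real" where
  "wedge V W i j = V$i * W$j - V$j * W$i"

definition form_norm2 :: "('n::finite \<Rightarrow> 'n \<Rightarrow> real) \<Rightarrow> real" where
  "form_norm2 w = (\<Sum>i\<in>UNIV. \<Sum>j\<in>UNIV. (w i j)^2)"

end

theory Submission
  imports Defs
begin

(* View the doubled spinor space as a real inner product space with Re of the Hermitian
   product: Clifford multiplication by e_i is skew, e_0 is a symmetric involution
   anticommuting with the e_i, and multiplication by i is a skew complex structure commuting
   with everything. If N = |X| > 0, write X = N v with |v| = 1; then v e_0 is an isometry with
   <v e_0 phi, phi> = |phi|^2, so equality in Cauchy-Schwarz forces v e_0 phi = phi. If N = |Y|,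
   write Y = N v and get i v phi = phi in the same way. Substituting the fixed-point equation
   into either slot of the inner products defining Y (resp. X) and omega yields two expressions
   of opposite sign, whence v is orthogonal to Y and omega = v ^ Y (resp. v is orthogonal to X
   and omega = X ^ v). The quadratic identity then follows from Lagrange's identity
   |V ^ W|^2 = 2 (|V|^2 |W|^2 - (V.W)^2). *)

lemma eq_if_norm_eq_and_inner_eq:
  fixes x y :: "'a::real_inner"
  assumes "norm y = norm x" and "inner y x = inner x x"
  shows "y = x"
proof -
  have "(norm (y - x))^2 = (norm y)^2 - 2 * inner y x + (norm x)^2"
    by (simp add: power2_norm_eq_inner inner_diff inner_commute)
  then show ?thesis
    using assms by (simp add: power2_norm_eq_inner)
qed

lemma linear_if_adjoint:
  fixes f :: "'a::real_inner \<Rightarrow> 'b::real_inner"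
  assumes adj: "\<And>x y. inner (f x) y = inner x (g y)"
  shows "linear f"
proof (rule linearI)
  show "f (x + y) = f x + f y" for x y
    by (metis adj inner_add_left vector_eq_rdot)
  show "f (r *\<^sub>R x) = r *\<^sub>R f x" for r x
    by (metis adj inner_scaleR_left vector_eq_rdot)
qed

lemma form_norm2_wedge:
  "form_norm2 (wedge V W) = 2 * ((V \<bullet> V) * (W \<bullet> W) - (V \<bullet> W)^2)"
proof -
  have "(V$i * W$j - V$j * W$i)^2
      = (V$i * V$i) * (W$j * W$j) + (V$j * V$j) * (W$i * W$i) - 2 * ((V$i * W$i) * (V$j * W$j))" for i j
    by (simp add: power2_eq_square algebra_simps)
  then show ?thesis
    by (simp add: form_norm2_def wedge_def sum_subtractf sum.distrib inner_vec_def
        sum_product power2_eq_square sum_distrib_left[symmetric] mult.assoc sum.swap[of _ UNIV])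
qed

lemma wedge_norm_identity:
  fixes X Y :: "real^'n::finite" and \<omega> :: "'n \<Rightarrow> 'n \<Rightarrow> real"
  assumes "N \<noteq> 0" and wedge: "\<And>i j. N * \<omega> i j = wedge X Y i j" and "X \<bullet> Y = 0"
    and "N = norm X \<or> N = norm Y"
  shows "N^2 - (norm X)^2 - (norm Y)^2 + 1/2 * form_norm2 \<omega> = 0"
proof -
  have "N^2 * form_norm2 \<omega> = form_norm2 (wedge X Y)"
    by (simp add: form_norm2_def sum_distrib_left power_mult_distrib[symmetric] wedge[symmetric])
  also have "\<dots> = 2 * (norm X)^2 * (norm Y)^2"
    using \<open>X \<bullet> Y = 0\<close> by (simp add: form_norm2_wedge power2_norm_eq_inner)
  finally have "N^2 * form_norm2 \<omega> = 2 * (norm X)^2 * (norm Y)^2" .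
  then show ?thesis
    using assms(1,4) by auto
qed

(* c i, c0 and J model Clifford multiplication by e_i, by e_0 and multiplication by i.
   The [simp] commutation rules move J outward and c0 inward, which gives simp a normal form. *)
locale spacetime_spinor_module =
  fixes c :: "'n::finite \<Rightarrow> 'a::real_inner \<Rightarrow> 'a"
    and c0 :: "'a \<Rightarrow> 'a"
    and J :: "'a \<Rightarrow> 'a"
  assumes c_skew: "inner (c i x) y = - inner x (c i y)"
    and c_anticomm: "c i (c j x) + c j (c i x) = (if i = j then - 2 *\<^sub>R x else 0)"
    and c0_symm: "inner (c0 x) y = inner x (c0 y)"
    and c0_c0 [simp]: "c0 (c0 x) = x"
    and c0_c [simp]: "c0 (c i x) = - c i (c0 x)"
    and J_skew: "inner (J x) y = - inner x (J y)"
    and J_J [simp]: "J (J x) = - x"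
    and c_J [simp]: "c i (J x) = J (c i x)"
    and c0_J [simp]: "c0 (J x) = J (c0 x)"
begin

lemma c_linear: "linear (c i)"
  by (rule linear_if_adjoint[where g = "\<lambda>y. - c i y"]) (simp add: c_skew)

lemma c0_linear: "linear c0"
  by (rule linear_if_adjoint) (rule c0_symm)

lemma J_linear: "linear J"
  by (rule linear_if_adjoint[where g = "\<lambda>y. - J y"]) (simp add: J_skew)

lemmas operator_linear_simps [simp] =
  linear_add[OF c_linear] linear_diff[OF c_linear] linear_neg[OF c_linear]
  linear_scale[OF c_linear] linear_0[OF c_linear] linear_sum[OF c_linear]
  linear_add[OF c0_linear] linear_diff[OF c0_linear] linear_neg[OF c0_linear]
  linear_scale[OF c0_linear] linear_0[OF c0_linear] linear_sum[OF c0_linear]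
  linear_add[OF J_linear] linear_diff[OF J_linear] linear_neg[OF J_linear]
  linear_scale[OF J_linear] linear_0[OF J_linear] linear_sum[OF J_linear]

definition cmul :: "real^'n \<Rightarrow> 'a \<Rightarrow> 'a" where
  "cmul v x = (\<Sum>k\<in>UNIV. v$k *\<^sub>R c k x)"

definition X :: "'a \<Rightarrow> real^'n" where
  "X x = (\<chi> k. inner (c k (c0 x)) x)"

definition Y :: "'a \<Rightarrow> real^'n" where
  "Y x = (\<chi> k. inner (J (c k x)) x)"

(* Im z = - Re (i z), so this is the form Im <e_i e_j e_0 x, x>. *)
definition \<omega> :: "'a \<Rightarrow> 'n \<Rightarrow> 'n \<Rightarrow> real" where
  "\<omega> x i j = - inner (J (c i (c j (c0 x)))) x"

lemma cmul_skew: "inner (cmul v x) y = - inner x (cmul v y)"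
  by (simp add: cmul_def inner_sum_left inner_sum_right c_skew sum_negf)

lemma cmul_linear: "linear (cmul v)"
  by (rule linear_if_adjoint[where g = "\<lambda>y. - cmul v y"]) (simp add: cmul_skew)

lemmas cmul_linear_simps [simp] =
  linear_add[OF cmul_linear] linear_diff[OF cmul_linear] linear_neg[OF cmul_linear]
  linear_scale[OF cmul_linear] linear_0[OF cmul_linear]

lemma cmul_J [simp]: "cmul v (J x) = J (cmul v x)"
  by (simp add: cmul_def)

lemma c0_cmul [simp]: "c0 (cmul v x) = - cmul v (c0 x)"
  by (simp add: cmul_def sum_negf)

lemma c_cmul_anticomm: "c k (cmul v x) + cmul v (c k x) = (- 2 * v$k) *\<^sub>R x"
proof -
  have "c k (cmul v x) + cmul v (c k x) = (\<Sum>l\<in>UNIV. v$l *\<^sub>R (c k (c l x) + c l (c k x)))"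
    by (simp add: cmul_def scaleR_right.sum[symmetric] sum.distrib scaleR_add_right)
  also have "\<dots> = (- 2 * v$k) *\<^sub>R x"
    by (simp add: c_anticomm if_distrib[of "scaleR _"] cong: if_cong)
  finally show ?thesis .
qed

lemma c_cmul [simp]: "c k (cmul v x) = - cmul v (c k x) - (2 * v$k) *\<^sub>R x"
  using c_cmul_anticomm[of k v x] by (simp add: eq_diff_eq[symmetric])

lemma cmul_cmul [simp]: "cmul v (cmul v x) = - (v \<bullet> v) *\<^sub>R x"
proof -
  have "cmul v (cmul v x) = (\<Sum>k\<in>UNIV. v$k *\<^sub>R c k (cmul v x))"
    by (simp only: cmul_def[of v "cmul v x"])
  moreover have "cmul v (cmul v x) = (\<Sum>k\<in>UNIV. v$k *\<^sub>R cmul v (c k x))"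
    by (simp add: cmul_def[of v x] linear_sum[OF cmul_linear])
  ultimately have "cmul v (cmul v x) + cmul v (cmul v x)
      = (\<Sum>k\<in>UNIV. v$k *\<^sub>R (c k (cmul v x) + cmul v (c k x)))"
    by (simp add: scaleR_add_right sum.distrib del: c_cmul)
  also have "\<dots> = (- 2 * (v \<bullet> v)) *\<^sub>R x"
    by (simp add: c_cmul_anticomm inner_vec_def scaleR_sum_left sum_distrib_left mult_ac
        del: c_cmul)
  finally have twice: "cmul v (cmul v x) + cmul v (cmul v x) = (- 2 * (v \<bullet> v)) *\<^sub>R x" .
  have "cmul v (cmul v x) = (1/2) *\<^sub>R (cmul v (cmul v x) + cmul v (cmul v x))"
    by (simp flip: scaleR_2)
  then show ?thesis
    by (simp add: twice)
qed

lemma inner_c0_right: "inner x (c0 y) = inner (c0 x) y"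
  by (simp add: c0_symm)

lemma inner_J_right: "inner x (J y) = - inner (J x) y"
  by (simp add: J_skew)

lemma inner_cmul_right: "inner x (cmul v y) = - inner (cmul v x) y"
  by (simp add: cmul_skew)

lemma inner_X: "v \<bullet> X x = inner (cmul v (c0 x)) x"
  by (simp add: X_def cmul_def inner_vec_def inner_sum_left)

lemma inner_Y: "v \<bullet> Y x = inner (J (cmul v x)) x"
  by (simp add: Y_def cmul_def inner_vec_def inner_sum_left)

lemma norm_cmul_c0: "v \<bullet> v = 1 \<Longrightarrow> norm (cmul v (c0 x)) = norm x"
  by (simp add: norm_eq_sqrt_inner inner_cmul_right inner_c0_right)

lemma norm_J_cmul: "v \<bullet> v = 1 \<Longrightarrow> norm (J (cmul v x)) = norm x"
  by (simp add: norm_eq_sqrt_inner inner_cmul_right inner_J_right)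

lemma
  assumes "v \<bullet> v = 1" and fixed: "cmul v (c0 x) = x"
  shows orthogonal_Y_if_cmul_c0_fixed: "v \<bullet> Y x = 0"
    and \<omega>_if_cmul_c0_fixed: "\<omega> x i j = v$i * Y x $ j - v$j * Y x $ i"
proof -
  have "v \<bullet> Y x = inner (J (cmul v (cmul v (c0 x)))) x"
    by (simp add: inner_Y fixed)
  also have "\<dots> = - inner (J (c0 x)) x"
    using assms(1) by simp
  finally have left: "v \<bullet> Y x = - inner (J (c0 x)) x" .
  have "v \<bullet> Y x = inner (J (cmul v x)) (cmul v (c0 x))"
    by (simp add: inner_Y fixed)
  also have "\<dots> = inner (J (c0 x)) x"
    using assms(1) by (simp add: inner_cmul_right inner_c0_right)
  finally show "v \<bullet> Y x = 0"
    using left by simp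
  have "\<omega> x i j = - inner (J (c i (c j (c0 (cmul v (c0 x)))))) x"
    by (simp add: \<omega>_def fixed)
  also have "\<dots> = inner (J (cmul v (c i (c j x)))) x + 2 * v$i * Y x $ j - 2 * v$j * Y x $ i"
    by (simp add: Y_def inner_diff_left algebra_simps)
  finally have left:
      "\<omega> x i j = inner (J (cmul v (c i (c j x)))) x + 2 * v$i * Y x $ j - 2 * v$j * Y x $ i" .
  have "\<omega> x i j = - inner (J (c i (c j (c0 x)))) (cmul v (c0 x))"
    by (simp add: \<omega>_def fixed)
  also have "\<dots> = - inner (J (cmul v (c i (c j x)))) x"
    by (simp add: inner_cmul_right inner_c0_right)
  finally show "\<omega> x i j = v$i * Y x $ j - v$j * Y x $ i"
    using left by simp
qed

lemma
  assumes "v \<bullet> v = 1" and fixed: "J (cmul v x) = x"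
  shows orthogonal_X_if_J_cmul_fixed: "v \<bullet> X x = 0"
    and \<omega>_if_J_cmul_fixed: "\<omega> x i j = v$j * X x $ i - v$i * X x $ j"
proof -
  have "v \<bullet> X x = inner (cmul v (c0 (J (cmul v x)))) x"
    by (simp add: inner_X fixed)
  also have "\<dots> = inner (J (c0 x)) x"
    using assms(1) by simp
  finally have left: "v \<bullet> X x = inner (J (c0 x)) x" .
  have "v \<bullet> X x = inner (cmul v (c0 x)) (J (cmul v x))"
    by (simp add: inner_X fixed)
  also have "\<dots> = - inner (J (c0 x)) x"
    using assms(1) by (simp add: inner_cmul_right inner_J_right)
  finally show "v \<bullet> X x = 0"
    using left by simp
  have "\<omega> x i j = - inner (J (c i (c j (c0 (J (cmul v x)))))) x"
    by (simp add: \<omega>_def fixed)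
  also have "\<dots> = - inner (cmul v (c i (c j (c0 x)))) x - 2 * v$i * X x $ j + 2 * v$j * X x $ i"
    by (simp add: X_def inner_diff_left algebra_simps)
  finally have left:
      "\<omega> x i j = - inner (cmul v (c i (c j (c0 x)))) x - 2 * v$i * X x $ j + 2 * v$j * X x $ i" .
  have "\<omega> x i j = - inner (J (c i (c j (c0 x)))) (J (cmul v x))"
    by (simp add: \<omega>_def fixed)
  also have "\<dots> = inner (cmul v (c i (c j (c0 x)))) x"
    by (simp add: inner_cmul_right inner_J_right)
  finally show "\<omega> x i j = v$j * X x $ i - v$i * X x $ j"
    using left by simp
qed

lemma
  assumes "inner x x = norm (X x)" and "x \<noteq> 0"
  shows orthogonal_X_Y_if_norm_X: "X x \<bullet> Y x = 0"
    and wedge_X_Y_if_norm_X: "inner x x * \<omega> x i j = wedge (X x) (Y x) i j"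
proof -
  define N where "N = inner x x"
  define v where "v = (1 / N) *\<^sub>R X x"
  have "N > 0"
    using \<open>x \<noteq> 0\<close> by (simp add: N_def)
  then have X: "X x = N *\<^sub>R v" and unit: "v \<bullet> v = 1"
    using assms(1) by (simp_all add: v_def N_def power2_eq_square flip: power2_norm_eq_inner)
  have "inner (cmul v (c0 x)) x = inner x x"
    using unit by (simp add: X N_def flip: inner_X)
  then have fixed: "cmul v (c0 x) = x"
    by (rule eq_if_norm_eq_and_inner_eq[OF norm_cmul_c0[OF unit]])
  show "X x \<bullet> Y x = 0"
    by (simp add: X orthogonal_Y_if_cmul_c0_fixed[OF unit fixed])
  show "inner x x * \<omega> x i j = wedge (X x) (Y x) i j"
    by (simp add: X wedge_def \<omega>_if_cmul_c0_fixed[OF unit fixed] N_def algebra_simps)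
qed

lemma
  assumes "inner x x = norm (Y x)" and "x \<noteq> 0"
  shows orthogonal_X_Y_if_norm_Y: "X x \<bullet> Y x = 0"
    and wedge_X_Y_if_norm_Y: "inner x x * \<omega> x i j = wedge (X x) (Y x) i j"
proof -
  define N where "N = inner x x"
  define v where "v = (1 / N) *\<^sub>R Y x"
  have "N > 0"
    using \<open>x \<noteq> 0\<close> by (simp add: N_def)
  then have Y: "Y x = N *\<^sub>R v" and unit: "v \<bullet> v = 1"
    using assms(1) by (simp_all add: v_def N_def power2_eq_square flip: power2_norm_eq_inner)
  have "inner (J (cmul v x)) x = inner x x"
    using unit by (simp add: Y N_def flip: inner_Y)
  then have fixed: "J (cmul v x) = x"
    by (rule eq_if_norm_eq_and_inner_eq[OF norm_J_cmul[OF unit]])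
  show "X x \<bullet> Y x = 0"
    by (simp add: Y inner_commute orthogonal_X_if_J_cmul_fixed[OF unit fixed])
  show "inner x x * \<omega> x i j = wedge (X x) (Y x) i j"
    by (simp add: Y wedge_def \<omega>_if_J_cmul_fixed[OF unit fixed] N_def algebra_simps)
qed

theorem identities_if_norm_eq:
  assumes "inner x x = norm (X x) \<or> inner x x = norm (Y x)"
  shows "(\<forall>i j. inner x x * \<omega> x i j = wedge (X x) (Y x) i j)
    \<and> X x \<bullet> Y x = 0
    \<and> (inner x x)^2 - (norm (X x))^2 - (norm (Y x))^2 + 1/2 * form_norm2 (\<omega> x) = 0"
proof (cases "x = 0")
  case True
  then show ?thesis
    by (simp add: X_def Y_def \<omega>_def wedge_def form_norm2_def vec_eq_iff)
next
  case False
  have wedge: "\<forall>i j. inner x x * \<omega> x i j = wedge (X x) (Y x) i j"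
    and orthogonal: "X x \<bullet> Y x = 0"
    using assms False wedge_X_Y_if_norm_X wedge_X_Y_if_norm_Y
      orthogonal_X_Y_if_norm_X orthogonal_X_Y_if_norm_Y by blast+
  moreover have "inner x x \<noteq> 0"
    using False by simp
  ultimately show ?thesis
    using assms wedge_norm_identity by blast
qed

end

lemma inner_eq_Re_hermb: "inner \<phi> \<psi> = Re (hermb \<phi> \<psi>)"
  by (simp add: inner_prod_def inner_vec_def inner_complex_def hermb_def herm_def)

lemma Im_hermb_eq_inner_imul: "Im (hermb \<psi> \<phi>) = - inner (imul \<psi>) \<phi>"
  by (simp add: inner_prod_def inner_vec_def inner_complex_def hermb_def herm_def imul_def
      sum_negf[symmetric] sum.distrib[symmetric])

lemma matrix_vector_mult_mat: "mat a *v u = a *s u"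
  by (simp add: vec_eq_iff matrix_vector_mult_def mat_def if_distrib if_distribR cong: if_cong)

lemma spacetime_spinor_module_cliff:
  fixes E :: "'n::finite \<Rightarrow> complex^'m::finite^'m"
  assumes "spinor_module E"
  shows "spacetime_spinor_module (cliff E) e0 imul"
proof
  have neg: "A *v (- u) = - (A *v u)" for A :: "complex^'m^'m" and u
    by (rule linear_neg[OF matrix_vector_mul_linear])
  fix i j :: 'n and x y :: "'m sbar"
  have skew: "herm (E i *v u) w = - herm u (E i *v w)" for u w
    using assms by (simp add: spinor_module_def)
  have herm_neg: "herm (- u) w = - herm u w" "herm u (- w) = - herm u w" for u w :: "complex^'m"
    by (simp_all add: herm_def sum_negf)
  show "inner (cliff E i x) y = - inner x (cliff E i y)"
    by (simp add: inner_eq_Re_hermb hermb_def cliff_def skew herm_neg)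
  have "E i *v (E j *v u) + E j *v (E i *v u) = (if i = j then - 2 else 0) *s u" for u
    using assms by (simp add: spinor_module_def matrix_vector_mul_assoc
        flip: matrix_vector_mult_add_rdistrib matrix_vector_mult_mat)
  then show "cliff E i (cliff E j x) + cliff E j (cliff E i x) = (if i = j then - 2 *\<^sub>R x else 0)"
    by (simp add: cliff_def neg prod_eq_iff vec_eq_iff scaleR_conv_of_real)
  show "inner (e0 x) y = inner x (e0 y)"
    by (simp add: inner_prod_def e0_def add.commute)
  show "e0 (e0 x) = x"
    by (simp add: e0_def)
  show "e0 (cliff E i x) = - cliff E i (e0 x)"
    by (simp add: e0_def cliff_def)
  show "inner (imul x) y = - inner x (imul y)"
    by (simp add: inner_prod_def inner_vec_def inner_complex_def imul_def sum_negf[symmetric]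
        sum.distrib[symmetric])
  show "imul (imul x) = - x"
    by (simp add: imul_def vec_eq_iff prod_eq_iff)
  show "cliff E i (imul x) = imul (cliff E i x)"
    by (simp add: cliff_def imul_def vector_scalar_commute neg)
  show "e0 (imul x) = imul (e0 x)"
    by (simp add: e0_def imul_def)
qed

theorem mainTheorem8:
  fixes E :: "'n::finite \<Rightarrow> complex^'m::finite^'m" and \<phi> :: "'m sbar"
  assumes "spinor_module E"
    and "Nf \<phi> = norm (Xf E \<phi>) \<or> Nf \<phi> = norm (Yf E \<phi>)"
  shows "(\<forall>i j. Nf \<phi> * omega E \<phi> i j = wedge (Xf E \<phi>) (Yf E \<phi>) i j)
    \<and> Xf E \<phi> \<bullet> Yf E \<phi> = 0
    \<and> (Nf \<phi>)^2 - (norm (Xf E \<phi>))^2 - (norm (Yf E \<phi>))^2 + 1/2 * form_norm2 (omega E \<phi>) = 0"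
proof -
  interpret spacetime_spinor_module "cliff E" e0 imul
    using assms(1) by (rule spacetime_spinor_module_cliff)
  have "Nf \<phi> = inner \<phi> \<phi>" and "Xf E \<phi> = X \<phi>" and "Yf E \<phi> = Y \<phi>" and "omega E \<phi> = \<omega> \<phi>"
    by (simp_all add: Nf_def Xf_def Yf_def omega_def X_def Y_def \<omega>_def fun_eq_iff
        inner_eq_Re_hermb Im_hermb_eq_inner_imul)
  then show ?thesis
    using identities_if_norm_eq[of \<phi>] assms(2) by simp
qed

end
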